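(* In the setting below, let $z_0$ be a singular point of $P$ with $k_1\neq0$, $\phi(z_0)=0$ and $\hat R_{\theta_1'\theta_1'}(z_0)\neq0$. Put $\ell_1=\hat R_{\theta_1'r_2'}(z_0)/\hat R_{\theta_1'\theta_1'}(z_0)$, $\ell_2=\hat R_{\theta_1'\theta_2'}(z_0)/\hat R_{\theta_1'\theta_1'}(z_0)$, and new coordinates $(r_1'',\theta_1'',r_2'',\theta_2'')=(r_1',\theta_1'+\ell_1r_2'+\ell_2\theta_2',r_2',\theta_2')$. Then the Hessian of $\hat R$ with respect to $(\theta_1'',r_2'',\theta_2'')$ at $z_0$ is the diagonal matrix $$\operatorname{diag}\Big(\hat R_{\theta_1'\theta_1'}(z_0),\ -\frac{4(p-1)^2|\mu|^2}{k_1^2\hat R_{\theta_1'\theta_1'}(z_0)},\ 0\Big),\quad\text{where }\hat R_{\theta_1'\theta_1'}(z_0)=\frac{4(p-1)|\mu|^3|u_0|\sin\Theta_1\cos\Theta_2}{k_1^2}.$$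
   Context: Fix integers $p,q\ge2$ and $\mu\in\mathbb{C}\setminus\{0\}$. Let $P(u,v;\mu)=\mu(u^p+\bar u)+v^q+\bar v$, regarded as a smooth map $\mathbb{R}^4\to\mathbb{R}^2$, with $Q=\operatorname{Re}P$, $R=\operatorname{Im}P$. A singular point is a point where the real differential of $P$ has rank $<2$; every singular point $z_0=(u_0,v_0)$ satisfies $u_0v_0\ne0$. Use polar coordinates $r_1=|u|,\theta_1=\arg u,r_2=|v|,\theta_2=\arg v$ near $z_0$. Fix real representatives $\arg u_0,\arg v_0,\arg\mu$ and an integer $\kappa$ with $\frac{p-1}{2}\arg u_0+\arg\mu=\frac{q-1}{2}\arg v_0+\kappa\pi$. Set $\Theta_1=\frac{p+1}{2}\arg u_0$, $\Theta_2=\frac{p-1}{2}\arg u_0+\arg\mu$, $\Theta_3=\frac{q+1}{2}\arg v_0$, $(k_1,k_2,k_3,k_4)=(\partial_{r_1}Q,\partial_{\theta_1}Q,\partial_{r_2}Q,\partial_{\theta_2}Q)(z_0)$, and $\phi(z_0)=(-1)^\kappa(p-1)|v_0|\sin\Theta_3+(q-1)|\mu||u_0|\sin\Theta_1$. When $k_1\ne0$, define coordinates $(r_1',\theta_1',r_2',\theta_2')=(k_1r_1+k_2\theta_1+k_3r_2+k_4\theta_2,\theta_1,r_2,\theta_2)$ near $z_0$, $s=\frac{\partial R}{\partial r_1'}(z_0)$ and $\hat R=R-sQ$; subscripts on $\hat R$ denote partial derivatives in the indicated coordinate system. *)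

theory Defs
  imports "HOL-Analysis.Analysis"
begin

definition Pmap :: "nat \<Rightarrow> nat \<Rightarrow> complex \<Rightarrow> complex \<times> complex \<Rightarrow> complex" where
  "Pmap p q \<mu> z = \<mu> * (fst z ^ p + cnj (fst z)) + snd z ^ q + cnj (snd z)"

definition singular_point :: "nat \<Rightarrow> nat \<Rightarrow> complex \<Rightarrow> complex \<times> complex \<Rightarrow> bool" where
  "singular_point p q \<mu> z \<longleftrightarrow> dim (range (frechet_derivative (Pmap p q \<mu>) (at z))) < 2"

definition pt4 :: "real \<Rightarrow> real \<Rightarrow> real \<Rightarrow> real \<Rightarrow> nat \<Rightarrow> real" where
  "pt4 a b c d = (\<lambda>i. if i = 0 then a else if i = 1 then b else if i = 2 then c else d)"

definition polar :: "(nat \<Rightarrow> real) \<Rightarrow> complex \<times> complex" where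
  "polar x = (complex_of_real (x 0) * cis (x 1), complex_of_real (x 2) * cis (x 3))"

definition Qpol :: "nat \<Rightarrow> nat \<Rightarrow> complex \<Rightarrow> (nat \<Rightarrow> real) \<Rightarrow> real" where
  "Qpol p q \<mu> x = Re (Pmap p q \<mu> (polar x))"

definition Rpol :: "nat \<Rightarrow> nat \<Rightarrow> complex \<Rightarrow> (nat \<Rightarrow> real) \<Rightarrow> real" where
  "Rpol p q \<mu> x = Im (Pmap p q \<mu> (polar x))"

definition pd :: "((nat \<Rightarrow> real) \<Rightarrow> real) \<Rightarrow> (nat \<Rightarrow> real) \<Rightarrow> nat \<Rightarrow> real" where
  "pd f x i = deriv (\<lambda>t. f (x(i := t))) (x i)"

definition pd2 :: "((nat \<Rightarrow> real) \<Rightarrow> real) \<Rightarrow> (nat \<Rightarrow> real) \<Rightarrow> nat \<Rightarrow> nat \<Rightarrow> real" where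
  "pd2 f x i j = pd (\<lambda>y. pd f y j) x i"

text \<open>First coordinate change (r1',th1',r2',th2') = (k1 r1 + k2 th1 + k3 r2 + k4 th2, th1, r2, th2),
  with k = (k 0, k 1, k 2, k 3) = (k1,k2,k3,k4), and its inverse (valid for k 0 \<noteq> 0).\<close>
definition chg1 :: "(nat \<Rightarrow> real) \<Rightarrow> (nat \<Rightarrow> real) \<Rightarrow> nat \<Rightarrow> real" where
  "chg1 k x = pt4 (k 0 * x 0 + k 1 * x 1 + k 2 * x 2 + k 3 * x 3) (x 1) (x 2) (x 3)"

definition chg1_inv :: "(nat \<Rightarrow> real) \<Rightarrow> (nat \<Rightarrow> real) \<Rightarrow> nat \<Rightarrow> real" where
  "chg1_inv k y = pt4 ((y 0 - k 1 * y 1 - k 2 * y 2 - k 3 * y 3) / k 0) (y 1) (y 2) (y 3)"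

definition chg2 :: "real \<Rightarrow> real \<Rightarrow> (nat \<Rightarrow> real) \<Rightarrow> nat \<Rightarrow> real" where
  "chg2 l1 l2 y = pt4 (y 0) (y 1 + l1 * y 2 + l2 * y 3) (y 2) (y 3)"

definition chg2_inv :: "real \<Rightarrow> real \<Rightarrow> (nat \<Rightarrow> real) \<Rightarrow> nat \<Rightarrow> real" where
  "chg2_inv l1 l2 w = pt4 (w 0) (w 1 - l1 * w 2 - l2 * w 3) (w 2) (w 3)"

end

theory Submission
  imports Defs
begin

text \<open>In polar coordinates \<open>P\<close> is a finite sum of monomials \<open>c r\<^sup>j cis (n \<theta>)\<close>,
  a class closed under partial differentiation, so every derivative at \<open>z\<^sub>0\<close> is explicit.
  Singularity forces \<open>p \<bar>u\<^sub>0\<bar>\<^bsup>p-1\<^esup> = q \<bar>v\<^sub>0\<bar>\<^bsup>q-1\<^esup> = 1\<close>, and then all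
  first and second derivatives of \<open>P\<close> at \<open>z\<^sub>0\<close> share the phase \<open>cis \<Theta>\<^sub>2\<close>.
  Hence \<open>s = tan \<Theta>\<^sub>2\<close>, and \<open>Rhat = Re ((-\<i> - tan \<Theta>\<^sub>2) P)\<close> has as Hessian the
  imaginary part of the phase-free Hessian of \<open>P\<close> divided by \<open>cos \<Theta>\<^sub>2\<close>: a quadratic form
  that splits into a \<open>u\<close>-block and a \<open>v\<close>-block. The coordinate changes are linear, so they
  act on this form by congruence; the choice of \<open>l\<^sub>1, l\<^sub>2\<close> kills the mixed entries with
  \<open>\<theta>\<^sub>1''\<close>, and \<open>\<phi>(z\<^sub>0) = 0\<close> is exactly what makes the remaining \<open>2 \<times> 2\<close> block
  degenerate.\<close>

text \<open>\<open>(c, j, n, b)\<close> stands for \<open>c \<cdot> x\<^sub>b\<^sup>j \<cdot> cis (n \<cdot> x\<^sub>b\<^sub>+\<^sub>1)\<close>, a monomial in the polar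
  coordinates \<open>(x\<^sub>b, x\<^sub>b\<^sub>+\<^sub>1)\<close> of one complex variable.\<close>
type_synonym polar_mono = "complex \<times> nat \<times> real \<times> nat"

definition eval_mono :: "polar_mono \<Rightarrow> (nat \<Rightarrow> real) \<Rightarrow> complex" where
  "eval_mono \<tau> x = (case \<tau> of (c, j, n, b) \<Rightarrow> c * of_real (x b ^ j) * cis (n * x (Suc b)))"

definition eval_monos :: "polar_mono list \<Rightarrow> (nat \<Rightarrow> real) \<Rightarrow> complex" where
  "eval_monos xs x = (\<Sum>\<tau>\<leftarrow>xs. eval_mono \<tau> x)"

definition dir_deriv_mono :: "(nat \<Rightarrow> real) \<Rightarrow> polar_mono \<Rightarrow> polar_mono list" where
  "dir_deriv_mono d \<tau> = (case \<tau> of (c, j, n, b) \<Rightarrow>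
     [(c * of_nat j * of_real (d b), j - 1, n, b), (c * \<i> * of_real (n * d (Suc b)), j, n, b)])"

definition dir_deriv_monos :: "(nat \<Rightarrow> real) \<Rightarrow> polar_mono list \<Rightarrow> polar_mono list" where
  "dir_deriv_monos d xs = concat (map (dir_deriv_mono d) xs)"

lemma eval_monos_simps [simp]:
  "eval_monos [] x = 0"
  "eval_monos (\<tau> # xs) x = eval_mono \<tau> x + eval_monos xs x"
  by (simp_all add: eval_monos_def)

lemma eval_monos_append: "eval_monos (xs @ ys) x = eval_monos xs x + eval_monos ys x"
  by (simp add: eval_monos_def)

lemma dir_deriv_monos_append:
  "dir_deriv_monos d (xs @ ys) = dir_deriv_monos d xs @ dir_deriv_monos d ys"
  by (simp add: dir_deriv_monos_def)

lemma eval_monos_dir_deriv_Cons: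
  "eval_monos (dir_deriv_monos d (\<tau> # xs)) x
     = eval_monos (dir_deriv_mono d \<tau>) x + eval_monos (dir_deriv_monos d xs) x"
  by (simp add: dir_deriv_monos_def eval_monos_append)

lemma has_real_derivative_Re_eval_mono:
  "((\<lambda>t. Re (\<kappa> * eval_mono \<tau> (\<lambda>i. a i + t * d i))) has_real_derivative
     Re (\<kappa> * eval_monos (dir_deriv_mono d \<tau>) (\<lambda>i. a i + t * d i))) (at t)"
proof -
  obtain c j n b where \<tau>: "\<tau> = (c, j, n, b)" by (cases \<tau>) auto
  define r where "r t = a b + t * d b" for t
  define \<theta> where "\<theta> t = n * (a (Suc b) + t * d (Suc b))" for t
  have Re_eval: "Re (\<kappa> * eval_mono \<tau> (\<lambda>i. a i + t * d i))
      = r t ^ j * (Re (\<kappa> * c) * cos (\<theta> t) - Im (\<kappa> * c) * sin (\<theta> t))" for t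
    by (simp add: \<tau> eval_mono_def r_def \<theta>_def cis.ctr algebra_simps)
  have "((\<lambda>t. r t ^ j * (Re (\<kappa> * c) * cos (\<theta> t) - Im (\<kappa> * c) * sin (\<theta> t))) has_real_derivative
     (of_nat j * r t ^ (j - 1) * d b) * (Re (\<kappa> * c) * cos (\<theta> t) - Im (\<kappa> * c) * sin (\<theta> t))
     + r t ^ j * (Re (\<kappa> * c) * (- sin (\<theta> t) * (n * d (Suc b)))
        - Im (\<kappa> * c) * (cos (\<theta> t) * (n * d (Suc b))))) (at t)"
    unfolding r_def \<theta>_def by (rule derivative_eq_intros refl | simp)+
  then show ?thesis
    unfolding Re_eval by (simp add: \<tau> dir_deriv_mono_def eval_mono_def r_def \<theta>_def cis.ctr algebra_simps)
qed

lemma has_real_derivative_Re_eval_monos: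
  "((\<lambda>t. Re (\<kappa> * eval_monos xs (\<lambda>i. a i + t * d i))) has_real_derivative
     Re (\<kappa> * eval_monos (dir_deriv_monos d xs) (\<lambda>i. a i + t * d i))) (at t)"
proof (induction xs)
  case Nil
  then show ?case by (simp add: dir_deriv_monos_def)
next
  case (Cons \<tau> xs)
  from DERIV_add[OF has_real_derivative_Re_eval_mono Cons.IH] show ?case
    by (simp add: eval_monos_dir_deriv_Cons distrib_left)
qed

lemma pd_Re_eval_monos_affine:
  assumes "\<And>w t. A (w(j := t)) = (\<lambda>m. A w m + (t - w j) * d m)"
  shows "pd (\<lambda>y. Re (\<kappa> * eval_monos xs (A y))) w j = Re (\<kappa> * eval_monos (dir_deriv_monos d xs) (A w))"
proof -
  define a where "a m = A w m - w j * d m" for m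
  have line: "A (w(j := t)) = (\<lambda>i. a i + t * d i)" for t
    by (simp add: assms a_def algebra_simps)
  have "A w = (\<lambda>i. a i + w j * d i)" by (simp add: a_def)
  with has_real_derivative_Re_eval_monos[of \<kappa> xs a d "w j"] show ?thesis
    unfolding pd_def line by (simp add: DERIV_imp_deriv)
qed

lemma pd2_Re_eval_monos_affine:
  assumes "\<And>j w t. A (w(j := t)) = (\<lambda>m. A w m + (t - w j) * d j m)"
  shows "pd2 (\<lambda>y. Re (\<kappa> * eval_monos xs (A y))) w i j
    = Re (\<kappa> * eval_monos (dir_deriv_monos (d i) (dir_deriv_monos (d j) xs)) (A w))"
  unfolding pd2_def by (simp only: pd_Re_eval_monos_affine[OF assms])

definition conj_power_monos :: "complex \<Rightarrow> nat \<Rightarrow> nat \<Rightarrow> polar_mono list" where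
  "conj_power_monos c n b = [(c, n, real n, b), (c, 1, -1, b)]"

lemma Pmap_polar:
  "Pmap p q \<mu> (polar x) = eval_monos (conj_power_monos \<mu> p 0 @ conj_power_monos 1 q 2) x"
  by (simp add: Pmap_def polar_def conj_power_monos_def eval_mono_def power_mult_distrib
      Complex.DeMoivre cis_cnj algebra_simps)

text \<open>The imaginary part of the polar Hessian of \<open>w\<^sup>n + cnj w\<close> at a radius with
  \<open>n \<rho>\<^bsup>n-1\<^esup> = 1\<close>, once the common phase is divided out (lemma \<open>Im_eval_dir_deriv2\<close>).\<close>
definition conj_power_hessian :: "nat \<Rightarrow> real \<Rightarrow> real \<Rightarrow> real \<Rightarrow> real \<Rightarrow> real \<Rightarrow> real \<Rightarrow> real" where
  "conj_power_hessian n \<rho> \<Theta> d1 d2 e1 e2 = (real n - 1)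
     * (sin \<Theta> / \<rho> * d1 * e1 + cos \<Theta> * (d1 * e2 + d2 * e1) - \<rho> * sin \<Theta> * d2 * e2)"

locale conj_power_critical =
  fixes c :: complex and n b :: nat and x :: "nat \<Rightarrow> real" and C \<rho> \<Theta> \<Phi> :: real
  assumes n_ge: "n \<ge> 2" and \<rho>_pos: "\<rho> > 0" and critical: "real n * \<rho> ^ (n - 1) = 1"
    and x_radius: "x b = \<rho>"
    and c_cis: "c * cis (n * x (Suc b)) = of_real C * cis \<Theta> * cis \<Phi>"
    and c_cis_conj: "c * cis (- x (Suc b)) = of_real C * cis (- \<Theta>) * cis \<Phi>"
begin

lemma radius_powers:
  "real n * \<rho> ^ n = \<rho>" "real n * (real n - 1) * \<rho> ^ (n - 2) = (real n - 1) / \<rho>"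
proof -
  have "n = Suc (n - 1)" "n - 1 = Suc (n - 2)" using n_ge by simp_all
  then have "\<rho> ^ n = \<rho> * \<rho> ^ (n - 1)" "\<rho> ^ (n - 1) = \<rho> * \<rho> ^ (n - 2)"
    by (metis power_Suc)+
  then show "real n * \<rho> ^ n = \<rho>" "real n * (real n - 1) * \<rho> ^ (n - 2) = (real n - 1) / \<rho>"
    using critical \<rho>_pos by (simp_all add: field_simps)
qed

lemma eval_dir_deriv:
  "eval_monos (dir_deriv_monos d (conj_power_monos c n b)) x
     = of_real (2 * C * (d b * cos \<Theta> - \<rho> * d (Suc b) * sin \<Theta>)) * cis \<Phi>"
proof -
  have "eval_monos (dir_deriv_monos d (conj_power_monos c n b)) x
      = of_real (d b) * (of_real (real n * \<rho> ^ (n - 1)) * (c * cis (n * x (Suc b))) + c * cis (- x (Suc b)))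
        + \<i> * of_real (d (Suc b))
          * (of_real (real n * \<rho> ^ n) * (c * cis (n * x (Suc b))) - of_real \<rho> * (c * cis (- x (Suc b))))"
    by (simp add: dir_deriv_monos_def dir_deriv_mono_def conj_power_monos_def eval_mono_def
        x_radius algebra_simps)
  also have "\<dots> = of_real C * cis \<Phi> * (of_real (d b) * (cis \<Theta> + cis (- \<Theta>))
      + \<i> * of_real (d (Suc b) * \<rho>) * (cis \<Theta> - cis (- \<Theta>)))"
    unfolding critical radius_powers c_cis c_cis_conj by (simp add: algebra_simps)
  also have "\<dots> = of_real (2 * C * (d b * cos \<Theta> - \<rho> * d (Suc b) * sin \<Theta>)) * cis \<Phi>"
    by (simp add: cis.ctr complex_eq_iff algebra_simps)
  finally show ?thesis .
qed

lemma Im_eval_dir_deriv2: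
  "Im (eval_monos (dir_deriv_monos d (dir_deriv_monos e (conj_power_monos c n b))) x / cis \<Phi>)
     = C * conj_power_hessian n \<rho> \<Theta> (d b) (d (Suc b)) (e b) (e (Suc b))"
proof -
  have n1: "real (n - 1) = real n - 1" "(of_nat (n - Suc 0) :: complex) = of_nat n - 1"
    "n - Suc (Suc 0) = n - 2"
    using n_ge by (simp_all add: of_nat_diff)
  have "eval_monos (dir_deriv_monos d (dir_deriv_monos e (conj_power_monos c n b))) x
      = of_real (d b * e b) * (of_real (real n * (real n - 1) * \<rho> ^ (n - 2)) * (c * cis (n * x (Suc b))))
        + \<i> * of_real (d b * e (Suc b) + d (Suc b) * e b)
          * (of_real (real n * (real n * \<rho> ^ (n - 1))) * (c * cis (n * x (Suc b))) - c * cis (- x (Suc b)))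
        - of_real (d (Suc b) * e (Suc b))
          * (of_real (real n * (real n * \<rho> ^ n)) * (c * cis (n * x (Suc b))) + of_real \<rho> * (c * cis (- x (Suc b))))"
    by (simp add: dir_deriv_monos_def dir_deriv_mono_def conj_power_monos_def eval_mono_def
        x_radius n1 algebra_simps)
  also have "\<dots> = of_real C * cis \<Phi> * (of_real (d b * e b * (real n - 1) / \<rho>) * cis \<Theta>
      + \<i> * of_real (d b * e (Suc b) + d (Suc b) * e b) * (of_real n * cis \<Theta> - cis (- \<Theta>))
      - of_real (d (Suc b) * e (Suc b) * \<rho>) * (of_real n * cis \<Theta> + cis (- \<Theta>)))"
    (is "_ = _ * ?Z")
    unfolding critical radius_powers c_cis c_cis_conj by (simp add: algebra_simps)
  finally have "eval_monos (dir_deriv_monos d (dir_deriv_monos e (conj_power_monos c n b))) x / cis \<Phi>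
      = of_real C * ?Z"
    by simp
  moreover have "Im ?Z = conj_power_hessian n \<rho> \<Theta> (d b) (d (Suc b)) (e b) (e (Suc b))"
    using \<rho>_pos by (simp add: conj_power_hessian_def cis.ctr field_simps)
  ultimately show ?thesis by simp
qed

end

lemma conj_power_hessian_tan:
  assumes "cos \<Theta> \<noteq> 0" "\<rho> \<noteq> 0"
  shows "conj_power_hessian n \<rho> \<Theta> (\<rho> * tan \<Theta>) 1 (\<rho> * tan \<Theta>) 1 = (real n - 1) * \<rho> * sin \<Theta> / (cos \<Theta>)\<^sup>2"
    "conj_power_hessian n \<rho> \<Theta> (\<rho> * tan \<Theta>) 1 a 0 = (real n - 1) * a / cos \<Theta>"
    "conj_power_hessian n \<rho> \<Theta> (\<rho> * tan \<Theta>) 1 0 b = 0"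
  using assms
  by (simp_all add: conj_power_hessian_def tan_def field_simps power2_eq_square)
    (use sin_cos_squared_add3[of \<Theta>] in algebra)+

lemma conj_power_hessian_zero [simp]:
  "conj_power_hessian n \<rho> \<Theta> 0 0 e1 e2 = 0" "conj_power_hessian n \<rho> \<Theta> d1 d2 0 0 = 0"
  by (simp_all add: conj_power_hessian_def)

lemma conj_power_hessian_commute:
  "conj_power_hessian n \<rho> \<Theta> d1 d2 e1 e2 = conj_power_hessian n \<rho> \<Theta> e1 e2 d1 d2"
  by (simp add: conj_power_hessian_def algebra_simps)

lemma two_le_dim_if_Im_cnj_mult:
  fixes x y :: complex
  assumes "x \<in> S" "y \<in> S" and Im: "Im (cnj x * y) \<noteq> 0"
  shows "2 \<le> dim S"
proof -
  have "y \<noteq> 0" "x \<noteq> y" using Im by (auto simp: complex_eq_iff)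
  have "x \<notin> span {y}"
  proof
    assume "x \<in> span {y}"
    then obtain r where "x = r *\<^sub>R y" by (auto simp: span_singleton)
    with Im show False by (simp add: scaleR_conv_of_real)
  qed
  with \<open>y \<noteq> 0\<close> have "independent {x, y}" by (simp add: independent_insert)
  then have "card {x, y} \<le> dim S"
    using assms(1,2) by (intro independent_card_le_dim) auto
  with \<open>x \<noteq> y\<close> show ?thesis by simp
qed

lemma singular_point_moduli:
  assumes "singular_point p q \<mu> (u0, v0)" and "\<mu> \<noteq> 0"
  shows "real p * cmod u0 ^ (p - 1) = 1" "real q * cmod v0 ^ (q - 1) = 1"
proof -
  define L where "L h = \<mu> * (of_nat p * u0 ^ (p - 1) * fst h + cnj (fst h))
      + (of_nat q * v0 ^ (q - 1) * snd h + cnj (snd h))" for h :: "complex \<times> complex"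
  have "(Pmap p q \<mu> has_derivative L) (at (u0, v0))"
    unfolding Pmap_def[abs_def] L_def
    by (rule derivative_eq_intros refl | simp)+ (simp add: algebra_simps)
  then have rank: "dim (range L) < 2"
    using assms(1) unfolding singular_point_def by (simp add: frechet_derivative_at[symmetric])
  \<comment> \<open>On each factor the differential is \<open>h \<mapsto> m (a h + cnj h)\<close>, of rank \<open>< 2\<close> only if \<open>\<bar>a\<bar> = 1\<close>.\<close>
  have unimodular: "cmod a = 1"
    if "m \<noteq> 0" "m * (a + 1) \<in> range L" "m * (\<i> * a - \<i>) \<in> range L" for m a
  proof (rule ccontr)
    assume "cmod a \<noteq> 1"
    have "Im (cnj (m * (a + 1)) * (m * (\<i> * a - \<i>))) = (cmod m)\<^sup>2 * ((cmod a)\<^sup>2 - 1)"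
      unfolding cmod_power2 by (simp add: algebra_simps power2_eq_square)
    also have "\<dots> \<noteq> 0"
      using \<open>cmod a \<noteq> 1\<close> \<open>m \<noteq> 0\<close> by (simp add: power2_eq_1_iff) (smt (verit) norm_ge_zero)
    finally have "2 \<le> dim (range L)"
      using that(2,3) by (rule two_le_dim_if_Im_cnj_mult[rotated 2])
    with rank show False by simp
  qed
  have "cmod (of_nat p * u0 ^ (p - 1)) = 1"
  proof (rule unimodular[of \<mu>])
    show "\<mu> * (of_nat p * u0 ^ (p - 1) + 1) \<in> range L" "\<mu> * (\<i> * (of_nat p * u0 ^ (p - 1)) - \<i>) \<in> range L"
      by (rule range_eqI[of _ _ "(1, 0)"] range_eqI[of _ _ "(\<i>, 0)"]; simp add: L_def algebra_simps)+
  qed (rule assms(2))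
  moreover have "cmod (of_nat q * v0 ^ (q - 1)) = 1"
  proof (rule unimodular[of 1])
    show "1 * (of_nat q * v0 ^ (q - 1) + 1) \<in> range L" "1 * (\<i> * (of_nat q * v0 ^ (q - 1)) - \<i>) \<in> range L"
      by (rule range_eqI[of _ _ "(0, 1)"] range_eqI[of _ _ "(0, \<i>)"]; simp add: L_def algebra_simps)+
  qed simp
  ultimately show "real p * cmod u0 ^ (p - 1) = 1" "real q * cmod v0 ^ (q - 1) = 1"
    by (simp_all add: norm_mult norm_power)
qed

lemma chg1_inv_fun_upd:
  "chg1_inv k (w(j := t)) = (\<lambda>m. chg1_inv k w m + (t - w j) * chg1_inv k (\<lambda>m. of_bool (m = j)) m)"
  by (auto simp: chg1_inv_def pt4_def fun_eq_iff divide_simps) (simp_all add: algebra_simps)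

lemma chg12_inv_fun_upd:
  "chg1_inv k (chg2_inv l1 l2 (w(j := t))) = (\<lambda>m. chg1_inv k (chg2_inv l1 l2 w) m
     + (t - w j) * chg1_inv k (chg2_inv l1 l2 (\<lambda>m. of_bool (m = j))) m)"
  by (auto simp: chg1_inv_def chg2_inv_def pt4_def fun_eq_iff divide_simps) (simp_all add: algebra_simps)

lemma chg1_inv_chg1: "k 0 \<noteq> 0 \<Longrightarrow> chg1_inv k (chg1 k (pt4 a b c d)) = pt4 a b c d"
  by (simp add: chg1_inv_def chg1_def pt4_def)

lemma chg2_inv_chg2: "chg2_inv l1 l2 (chg2 l1 l2 (pt4 a b c d)) = pt4 a b c d"
  by (simp add: chg2_inv_def chg2_def pt4_def)

lemma cis_int_mult_pi: "cis (of_int k * pi) = complex_of_real ((-1) powi k)"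
  using cis_power_int[of pi k] by simp

lemma Qpol_eq_eval_monos:
  "Qpol p q \<mu> = (\<lambda>x. Re (1 * eval_monos (conj_power_monos \<mu> p 0 @ conj_power_monos 1 q 2) x))"
  unfolding Qpol_def[abs_def] Pmap_polar by simp

lemma Rpol_eq_eval_monos:
  "Rpol p q \<mu> = (\<lambda>x. Re (- \<i> * eval_monos (conj_power_monos \<mu> p 0 @ conj_power_monos 1 q 2) x))"
  unfolding Rpol_def[abs_def] Pmap_polar by (simp add: add.commute)

lemma fun_upd_eq_add_unit: "(w :: nat \<Rightarrow> real)(j := t) = (\<lambda>m. w m + (t - w j) * of_bool (m = j))"
  by auto

lemma Re_minus_i_tan_mult:
  assumes "cos t \<noteq> 0"
  shows "Re ((- \<i> - of_real (tan t)) * z) = Im (z / cis t) / cos t"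
proof -
  have "(- \<i> - of_real (tan t)) * (of_real (cos t) * cis t) = - \<i>"
    using assms by (simp add: complex_eq_iff cis.ctr tan_def field_simps)
      (metis distrib_left mult.right_neutral sin_cos_squared_add3)
  then have "- \<i> - of_real (tan t) = - \<i> / (of_real (cos t) * cis t)"
    by (rule eq_divide_imp[rotated]) (use assms in simp)
  then have "(- \<i> - of_real (tan t)) * z = - \<i> * (z / cis t) / of_real (cos t)"
    by simp
  then show ?thesis
    by (simp only: Re_divide_of_real mult_minus_left uminus_complex.sel Re_i_times minus_minus)
qed

text \<open>The angles are locale parameters, tied to \<open>a1, a2, am\<close> by equations, so that
  proofs inside the locale treat \<open>sin \<Theta>\<^sub>i, cos \<Theta>\<^sub>i\<close> as atoms.\<close>
locale singular_polar_point =
  fixes p q :: nat and \<mu> u0 v0 :: complex and a1 a2 am :: real and \<kappa> :: int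
    and \<Theta>1 \<Theta>2 \<Theta>3 \<epsilon> :: real
  assumes p_ge: "p \<ge> 2" and q_ge: "q \<ge> 2" and \<mu>_nz: "\<mu> \<noteq> 0"
    and singular: "singular_point p q \<mu> (u0, v0)"
    and arg_mu: "\<mu> = complex_of_real (cmod \<mu>) * cis am"
    and kappa: "(real p - 1) / 2 * a1 + am = (real q - 1) / 2 * a2 + real_of_int \<kappa> * pi"
    and \<Theta>1_eq: "\<Theta>1 = (real p + 1) / 2 * a1"
    and \<Theta>2_eq: "\<Theta>2 = (real p - 1) / 2 * a1 + am"
    and \<Theta>3_eq: "\<Theta>3 = (real q + 1) / 2 * a2"
    and \<epsilon>_eq: "\<epsilon> = (-1) powi \<kappa>"
begin

abbreviation "polar_z0 \<equiv> pt4 (cmod u0) a1 (cmod v0) a2"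
abbreviation "P_monos \<equiv> conj_power_monos \<mu> p 0 @ conj_power_monos 1 q 2"

lemma u_block: "conj_power_critical \<mu> p 0 polar_z0 (cmod \<mu>) (cmod u0) \<Theta>1 \<Theta>2"
proof
  have "real p * cmod u0 ^ (p - 1) = 1" using singular_point_moduli[OF singular \<mu>_nz] by simp
  then show "real p * cmod u0 ^ (p - 1) = 1" "cmod u0 > 0"
    using p_ge by (auto simp: power_0_left)
  have "am + real p * a1 = \<Theta>1 + \<Theta>2" "am + - a1 = - \<Theta>1 + \<Theta>2"
    by (simp_all add: \<Theta>1_eq \<Theta>2_eq field_simps)
  then have "\<mu> * cis (real p * a1) = of_real (cmod \<mu>) * cis (\<Theta>1 + \<Theta>2)"
    "\<mu> * cis (- a1) = of_real (cmod \<mu>) * cis (- \<Theta>1 + \<Theta>2)"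
    by (subst arg_mu; simp only: mult.assoc cis_mult)+
  then show "\<mu> * cis (real p * polar_z0 (Suc 0)) = of_real (cmod \<mu>) * cis \<Theta>1 * cis \<Theta>2"
    "\<mu> * cis (- polar_z0 (Suc 0)) = of_real (cmod \<mu>) * cis (- \<Theta>1) * cis \<Theta>2"
    by (simp_all only: pt4_def cis_mult mult.assoc) simp_all
qed (use p_ge in \<open>simp_all add: pt4_def\<close>)

lemma v_block: "conj_power_critical 1 q 2 polar_z0 \<epsilon> (cmod v0) \<Theta>3 \<Theta>2"
proof
  have "real q * cmod v0 ^ (q - 1) = 1" using singular_point_moduli[OF singular \<mu>_nz] by simp
  then show "real q * cmod v0 ^ (q - 1) = 1" "cmod v0 > 0"
    using q_ge by (auto simp: power_0_left)
  have \<epsilon>: "cis (of_int (- \<kappa>) * pi) = of_real \<epsilon>"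
    using cis_int_mult_pi[of "- \<kappa>"] by (simp add: \<epsilon>_eq power_int_minus_one_minus)
  have "real q * a2 = \<Theta>3 + \<Theta>2 + of_int (- \<kappa>) * pi" "- a2 = - \<Theta>3 + \<Theta>2 + of_int (- \<kappa>) * pi"
    using kappa by (simp_all add: \<Theta>2_eq \<Theta>3_eq field_simps)
  then have "cis (real q * a2) = cis \<Theta>3 * cis \<Theta>2 * of_real \<epsilon>"
    "cis (- a2) = cis (- \<Theta>3) * cis \<Theta>2 * of_real \<epsilon>"
    by (simp_all only: cis_mult[symmetric] \<epsilon>)
  then show "1 * cis (real q * polar_z0 (Suc 2)) = of_real \<epsilon> * cis \<Theta>3 * cis \<Theta>2"
    "1 * cis (- polar_z0 (Suc 2)) = of_real \<epsilon> * cis (- \<Theta>3) * cis \<Theta>2"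
    by (simp_all add: pt4_def mult_ac)
qed (use q_ge in \<open>simp_all add: pt4_def\<close>)

lemma \<epsilon>_squared: "\<epsilon>\<^sup>2 = 1"
  by (simp add: \<epsilon>_eq power2_eq_square flip: power_int_add)

abbreviation hessian_form :: "(nat \<Rightarrow> real) \<Rightarrow> (nat \<Rightarrow> real) \<Rightarrow> real" where
  "hessian_form d e \<equiv> cmod \<mu> * conj_power_hessian p (cmod u0) \<Theta>1 (d 0) (d 1) (e 0) (e 1)
                      + \<epsilon> * conj_power_hessian q (cmod v0) \<Theta>3 (d 2) (d 3) (e 2) (e 3)"

lemma hessian_form_commute: "hessian_form d e = hessian_form e d"
  by (simp add: conj_power_hessian_commute)

lemma hessian_form_pt4_zero:
  "hessian_form (pt4 0 b c d) (pt4 0 b' c' d')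
     = - cmod \<mu> * (real p - 1) * cmod u0 * sin \<Theta>1 * b * b' + \<epsilon> * conj_power_hessian q (cmod v0) \<Theta>3 c d c' d'"
  by (simp add: pt4_def conj_power_hessian_def)

lemma eval_dir_deriv_at_z0:
  "eval_monos (dir_deriv_monos d P_monos) polar_z0 = of_real (2 * (cmod \<mu> * (d 0 * cos \<Theta>1 - cmod u0 * d 1 * sin \<Theta>1)
      + \<epsilon> * (d 2 * cos \<Theta>3 - cmod v0 * d 3 * sin \<Theta>3))) * cis \<Theta>2"
  by (simp add: eval_monos_append dir_deriv_monos_append conj_power_critical.eval_dir_deriv[OF u_block]
      conj_power_critical.eval_dir_deriv[OF v_block] algebra_simps)

lemma Im_eval_dir_deriv2_at_z0:
  "Im (eval_monos (dir_deriv_monos d (dir_deriv_monos e P_monos)) polar_z0 / cis \<Theta>2) = hessian_form d e"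
  using conj_power_critical.Im_eval_dir_deriv2[OF u_block, of d e]
    conj_power_critical.Im_eval_dir_deriv2[OF v_block, of d e]
  by (simp add: eval_monos_append dir_deriv_monos_append add_divide_distrib)

lemma pd_Qpol_at_z0:
  "pd (Qpol p q \<mu>) polar_z0 0 = 2 * cmod \<mu> * cos \<Theta>1 * cos \<Theta>2"
  "pd (Qpol p q \<mu>) polar_z0 1 = - 2 * cmod \<mu> * cmod u0 * sin \<Theta>1 * cos \<Theta>2"
  "pd (Qpol p q \<mu>) polar_z0 2 = 2 * \<epsilon> * cos \<Theta>3 * cos \<Theta>2"
  "pd (Qpol p q \<mu>) polar_z0 3 = - 2 * \<epsilon> * cmod v0 * sin \<Theta>3 * cos \<Theta>2"
proof -
  have "pd (Qpol p q \<mu>) polar_z0 j = Re (1 * eval_monos (dir_deriv_monos (\<lambda>m. of_bool (m = j)) P_monos) polar_z0)" for j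
    unfolding Qpol_eq_eval_monos by (rule pd_Re_eval_monos_affine[where A = "\<lambda>y. y", OF fun_upd_eq_add_unit])
  then show "pd (Qpol p q \<mu>) polar_z0 0 = 2 * cmod \<mu> * cos \<Theta>1 * cos \<Theta>2"
    "pd (Qpol p q \<mu>) polar_z0 1 = - 2 * cmod \<mu> * cmod u0 * sin \<Theta>1 * cos \<Theta>2"
    "pd (Qpol p q \<mu>) polar_z0 2 = 2 * \<epsilon> * cos \<Theta>3 * cos \<Theta>2"
    "pd (Qpol p q \<mu>) polar_z0 3 = - 2 * \<epsilon> * cmod v0 * sin \<Theta>3 * cos \<Theta>2"
    by (simp_all add: eval_dir_deriv_at_z0 cis.ctr)
qed

lemma pd_Rpol_chg1_at_z0:
  assumes "k 0 = 2 * cmod \<mu> * cos \<Theta>1 * cos \<Theta>2" and "k 0 \<noteq> 0"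
  shows "pd (Rpol p q \<mu> \<circ> chg1_inv k) (chg1 k polar_z0) 0 = tan \<Theta>2"
proof -
  have "pd (Rpol p q \<mu> \<circ> chg1_inv k) (chg1 k polar_z0) 0
      = Re (- \<i> * eval_monos (dir_deriv_monos (chg1_inv k (\<lambda>m. of_bool (m = 0))) P_monos) (chg1_inv k (chg1 k polar_z0)))"
    unfolding comp_def Rpol_eq_eval_monos by (rule pd_Re_eval_monos_affine[OF chg1_inv_fun_upd])
  also have "\<dots> = Re (- \<i> * eval_monos (dir_deriv_monos (chg1_inv k (\<lambda>m. of_bool (m = 0))) P_monos) polar_z0)"
    by (simp only: chg1_inv_chg1[of k, OF assms(2)])
  also have "\<dots> = tan \<Theta>2"
    unfolding eval_dir_deriv_at_z0 using assms by (simp add: chg1_inv_def pt4_def cis.ctr tan_def)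
  finally show ?thesis .
qed

lemma pd2_Rhat_linear_coords:
  assumes "\<And>j w t. A (w(j := t)) = (\<lambda>m. A w m + (t - w j) * D j m)" and "A w = polar_z0" and "cos \<Theta>2 \<noteq> 0"
  shows "pd2 (\<lambda>y. Rpol p q \<mu> (A y) - tan \<Theta>2 * Qpol p q \<mu> (A y)) w i j = hessian_form (D i) (D j) / cos \<Theta>2"
proof -
  have Rhat: "(\<lambda>y. Rpol p q \<mu> (A y) - tan \<Theta>2 * Qpol p q \<mu> (A y))
      = (\<lambda>y. Re ((- \<i> - of_real (tan \<Theta>2)) * eval_monos P_monos (A y)))"
    by (simp add: Qpol_eq_eval_monos Rpol_eq_eval_monos algebra_simps)
  have "pd2 (\<lambda>y. Rpol p q \<mu> (A y) - tan \<Theta>2 * Qpol p q \<mu> (A y)) w i j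
      = Re ((- \<i> - of_real (tan \<Theta>2)) * eval_monos (dir_deriv_monos (D i) (dir_deriv_monos (D j) P_monos)) polar_z0)"
    unfolding Rhat pd2_Re_eval_monos_affine[OF assms(1)] assms(2) ..
  also have "\<dots> = hessian_form (D i) (D j) / cos \<Theta>2"
    by (simp only: Re_minus_i_tan_mult[OF assms(3)] Im_eval_dir_deriv2_at_z0)
  finally show ?thesis .
qed

lemma chg1_columns:
  assumes k: "k 0 = 2 * cmod \<mu> * cos \<Theta>1 * cos \<Theta>2" "k 1 = - 2 * cmod \<mu> * cmod u0 * sin \<Theta>1 * cos \<Theta>2"
      "k 2 = 2 * \<epsilon> * cos \<Theta>3 * cos \<Theta>2" "k 3 = - 2 * \<epsilon> * cmod v0 * sin \<Theta>3 * cos \<Theta>2"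
    and k0: "k 0 \<noteq> 0"
  shows "chg1_inv k (\<lambda>m. of_bool (m = 1)) = pt4 (cmod u0 * tan \<Theta>1) 1 0 0"
    "chg1_inv k (\<lambda>m. of_bool (m = 2)) = pt4 (- \<epsilon> * cos \<Theta>3 / (cmod \<mu> * cos \<Theta>1)) 0 1 0"
    "chg1_inv k (\<lambda>m. of_bool (m = 3)) = pt4 (\<epsilon> * cmod v0 * sin \<Theta>3 / (cmod \<mu> * cos \<Theta>1)) 0 0 1"
  using k0 by (simp_all add: chg1_inv_def k k(2)[unfolded One_nat_def] tan_def mult.assoc)

lemma chg1_hessian_entries:
  assumes "cos \<Theta>1 \<noteq> 0"
  shows "hessian_form (pt4 (cmod u0 * tan \<Theta>1) 1 0 0) (pt4 (cmod u0 * tan \<Theta>1) 1 0 0)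
      = cmod \<mu> * (real p - 1) * cmod u0 * sin \<Theta>1 / (cos \<Theta>1)\<^sup>2"
    "hessian_form (pt4 (cmod u0 * tan \<Theta>1) 1 0 0) (pt4 a 0 1 0) = cmod \<mu> * (real p - 1) * a / cos \<Theta>1"
    "hessian_form (pt4 (cmod u0 * tan \<Theta>1) 1 0 0) (pt4 a 0 0 1) = cmod \<mu> * (real p - 1) * a / cos \<Theta>1"
  using conj_power_hessian_tan[OF assms, of "cmod u0"] conj_power_critical.\<rho>_pos[OF u_block]
  by (simp_all add: pt4_def conj_power_hessian_def)

lemma chg1_hessian:
  assumes k: "k 0 = 2 * cmod \<mu> * cos \<Theta>1 * cos \<Theta>2" "k 1 = - 2 * cmod \<mu> * cmod u0 * sin \<Theta>1 * cos \<Theta>2"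
      "k 2 = 2 * \<epsilon> * cos \<Theta>3 * cos \<Theta>2" "k 3 = - 2 * \<epsilon> * cmod v0 * sin \<Theta>3 * cos \<Theta>2"
    and k0: "k 0 \<noteq> 0"
  defines "D j \<equiv> chg1_inv k (\<lambda>m. of_bool (m = j))"
  shows "hessian_form (D 1) (D 1) = cmod \<mu> * (real p - 1) * cmod u0 * sin \<Theta>1 / (cos \<Theta>1)\<^sup>2"
    "hessian_form (D 1) (D 2) = - (real p - 1) * \<epsilon> * cos \<Theta>3 / (cos \<Theta>1)\<^sup>2"
    "hessian_form (D 1) (D 3) = (real p - 1) * \<epsilon> * cmod v0 * sin \<Theta>3 / (cos \<Theta>1)\<^sup>2"
proof -
  have "cmod \<mu> \<noteq> 0" "cos \<Theta>1 \<noteq> 0" using k0 k(1) by auto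
  then show "hessian_form (D 1) (D 1) = cmod \<mu> * (real p - 1) * cmod u0 * sin \<Theta>1 / (cos \<Theta>1)\<^sup>2"
    "hessian_form (D 1) (D 2) = - (real p - 1) * \<epsilon> * cos \<Theta>3 / (cos \<Theta>1)\<^sup>2"
    "hessian_form (D 1) (D 3) = (real p - 1) * \<epsilon> * cmod v0 * sin \<Theta>3 / (cos \<Theta>1)\<^sup>2"
    unfolding D_def chg1_columns[OF k k0] chg1_hessian_entries[OF \<open>cos \<Theta>1 \<noteq> 0\<close>]
    by (simp_all add: field_simps power2_eq_square)
qed

lemma chg2_columns:
  assumes k: "k 0 = 2 * cmod \<mu> * cos \<Theta>1 * cos \<Theta>2" "k 1 = - 2 * cmod \<mu> * cmod u0 * sin \<Theta>1 * cos \<Theta>2"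
      "k 2 = 2 * \<epsilon> * cos \<Theta>3 * cos \<Theta>2" "k 3 = - 2 * \<epsilon> * cmod v0 * sin \<Theta>3 * cos \<Theta>2"
    and k0: "k 0 \<noteq> 0" and "sin \<Theta>1 \<noteq> 0"
    and l: "l1 = - \<epsilon> * cos \<Theta>3 / (cmod \<mu> * cmod u0 * sin \<Theta>1)"
      "l2 = \<epsilon> * cmod v0 * sin \<Theta>3 / (cmod \<mu> * cmod u0 * sin \<Theta>1)"
  shows "chg1_inv k (chg2_inv l1 l2 (\<lambda>m. of_bool (m = 1))) = pt4 (cmod u0 * tan \<Theta>1) 1 0 0"
    "chg1_inv k (chg2_inv l1 l2 (\<lambda>m. of_bool (m = 2))) = pt4 0 (- l1) 1 0"
    "chg1_inv k (chg2_inv l1 l2 (\<lambda>m. of_bool (m = 3))) = pt4 0 (- l2) 0 1"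
  using k0 \<open>sin \<Theta>1 \<noteq> 0\<close> conj_power_critical.\<rho>_pos[OF u_block]
  by (simp_all add: chg1_inv_def chg2_inv_def k k(2)[unfolded One_nat_def] l tan_def pt4_def field_simps)

lemma chg2_hessian:
  assumes k: "k 0 = 2 * cmod \<mu> * cos \<Theta>1 * cos \<Theta>2" "k 1 = - 2 * cmod \<mu> * cmod u0 * sin \<Theta>1 * cos \<Theta>2"
      "k 2 = 2 * \<epsilon> * cos \<Theta>3 * cos \<Theta>2" "k 3 = - 2 * \<epsilon> * cmod v0 * sin \<Theta>3 * cos \<Theta>2"
    and k0: "k 0 \<noteq> 0" and "sin \<Theta>1 \<noteq> 0"
    and \<phi>: "\<epsilon> * (real p - 1) * cmod v0 * sin \<Theta>3 + (real q - 1) * cmod \<mu> * cmod u0 * sin \<Theta>1 = 0"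
    and l: "l1 = - \<epsilon> * cos \<Theta>3 / (cmod \<mu> * cmod u0 * sin \<Theta>1)"
      "l2 = \<epsilon> * cmod v0 * sin \<Theta>3 / (cmod \<mu> * cmod u0 * sin \<Theta>1)"
  defines "E j \<equiv> chg1_inv k (chg2_inv l1 l2 (\<lambda>m. of_bool (m = j)))"
  shows "hessian_form (E 1) (E 1) = cmod \<mu> * (real p - 1) * cmod u0 * sin \<Theta>1 / (cos \<Theta>1)\<^sup>2"
    "hessian_form (E 1) (E 2) = 0" "hessian_form (E 1) (E 3) = 0"
    "hessian_form (E 2) (E 2) = - (real p - 1) / (cmod \<mu> * cmod u0 * sin \<Theta>1)"
    "hessian_form (E 2) (E 3) = 0" "hessian_form (E 3) (E 3) = 0"
proof -
  have "cos \<Theta>1 \<noteq> 0" using k0 k(1) by auto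
  have "cmod u0 > 0" using conj_power_critical.\<rho>_pos[OF u_block] .
  then have "u0 \<noteq> 0" by auto
  have "v0 \<noteq> 0" using conj_power_critical.\<rho>_pos[OF v_block] by auto
  note E = chg2_columns[OF k k0 \<open>sin \<Theta>1 \<noteq> 0\<close> l, folded E_def]
  show "hessian_form (E 1) (E 1) = cmod \<mu> * (real p - 1) * cmod u0 * sin \<Theta>1 / (cos \<Theta>1)\<^sup>2"
    "hessian_form (E 1) (E 2) = 0" "hessian_form (E 1) (E 3) = 0"
    unfolding E using conj_power_hessian_tan[OF \<open>cos \<Theta>1 \<noteq> 0\<close>, of "cmod u0"] \<open>cmod u0 > 0\<close>
    by (simp_all add: pt4_def)
  \<comment> \<open>\<open>\<phi>(z\<^sub>0) = 0\<close> is what makes the \<open>v\<close>-block cancel the \<open>u\<close>-block in the last two rows.\<close>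
  have \<nu>: "\<epsilon> * (real q - 1) = - (real p - 1) * cmod v0 * sin \<Theta>3 / (cmod \<mu> * cmod u0 * sin \<Theta>1)"
  proof -
    have "\<epsilon> * (real q - 1) * (cmod \<mu> * cmod u0 * sin \<Theta>1) = - (real p - 1) * cmod v0 * sin \<Theta>3"
      using \<phi> \<epsilon>_squared by algebra
    then show ?thesis
      using \<mu>_nz \<open>u0 \<noteq> 0\<close> \<open>sin \<Theta>1 \<noteq> 0\<close> by (simp add: eq_divide_eq)
  qed
  have l_products: "l1 * l1 * (cmod \<mu> * cmod u0 * sin \<Theta>1)\<^sup>2 = (cos \<Theta>3)\<^sup>2"
      "l1 * l2 * (cmod \<mu> * cmod u0 * sin \<Theta>1)\<^sup>2 = - cmod v0 * sin \<Theta>3 * cos \<Theta>3"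
      "l2 * l2 * (cmod \<mu> * cmod u0 * sin \<Theta>1)\<^sup>2 = (cmod v0 * sin \<Theta>3)\<^sup>2"
    using \<epsilon>_squared unfolding l by (simp_all add: \<mu>_nz \<open>u0 \<noteq> 0\<close> \<open>sin \<Theta>1 \<noteq> 0\<close> power2_eq_square field_simps)
  show "hessian_form (E 2) (E 2) = - (real p - 1) / (cmod \<mu> * cmod u0 * sin \<Theta>1)"
    "hessian_form (E 2) (E 3) = 0" "hessian_form (E 3) (E 3) = 0"
    unfolding E hessian_form_pt4_zero unfolding conj_power_hessian_def mult.assoc[of \<epsilon> "real q - 1", symmetric] \<nu>
    by (simp_all add: \<mu>_nz \<open>u0 \<noteq> 0\<close> \<open>v0 \<noteq> 0\<close> \<open>sin \<Theta>1 \<noteq> 0\<close> field_simps power2_eq_square)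
      (use l_products sin_cos_squared_add3[of \<Theta>3] in algebra)+
qed

lemma hessian_chg2_diagonal:
  fixes k :: "nat \<Rightarrow> real" and h l1 l2 :: real
  defines "D j \<equiv> chg1_inv k (\<lambda>m. of_bool (m = j))"
    and "E j \<equiv> chg1_inv k (chg2_inv l1 l2 (\<lambda>m. of_bool (m = j)))"
  assumes k: "k 0 = 2 * cmod \<mu> * cos \<Theta>1 * cos \<Theta>2" "k 1 = - 2 * cmod \<mu> * cmod u0 * sin \<Theta>1 * cos \<Theta>2"
      "k 2 = 2 * \<epsilon> * cos \<Theta>3 * cos \<Theta>2" "k 3 = - 2 * \<epsilon> * cmod v0 * sin \<Theta>3 * cos \<Theta>2"
    and k0: "k 0 \<noteq> 0"
    and \<phi>: "\<epsilon> * (real p - 1) * cmod v0 * sin \<Theta>3 + (real q - 1) * cmod \<mu> * cmod u0 * sin \<Theta>1 = 0"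
    and h: "h = hessian_form (D 1) (D 1) / cos \<Theta>2" and h0: "h \<noteq> 0"
    and l1: "l1 = hessian_form (D 1) (D 2) / cos \<Theta>2 / h"
    and l2: "l2 = hessian_form (D 1) (D 3) / cos \<Theta>2 / h"
  shows "(\<forall>i\<in>{1,2,3}. \<forall>j\<in>{1,2,3}. hessian_form (E i) (E j) / cos \<Theta>2 =
            (if i = j then (if i = 1 then h
                            else if i = 2 then - 4 * (real p - 1)^2 * (cmod \<mu>)^2 / ((k 0)^2 * h)
                            else 0)
             else 0))
       \<and> h = 4 * (real p - 1) * (cmod \<mu>)^3 * cmod u0 * sin \<Theta>1 * cos \<Theta>2 / (k 0)^2"
proof -
  have "cos \<Theta>1 \<noteq> 0" "cos \<Theta>2 \<noteq> 0" using k0 k(1) by auto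
  have "u0 \<noteq> 0" using conj_power_critical.\<rho>_pos[OF u_block] by auto
  note D = chg1_hessian[OF k k0, folded D_def]
  have h_val: "h = cmod \<mu> * (real p - 1) * cmod u0 * sin \<Theta>1 / ((cos \<Theta>1)\<^sup>2 * cos \<Theta>2)"
    unfolding h D by simp
  then have "sin \<Theta>1 \<noteq> 0" "real p - 1 \<noteq> 0" using h0 by auto
  have "l1 = - \<epsilon> * cos \<Theta>3 / (cmod \<mu> * cmod u0 * sin \<Theta>1)"
      "l2 = \<epsilon> * cmod v0 * sin \<Theta>3 / (cmod \<mu> * cmod u0 * sin \<Theta>1)"
    unfolding l1 l2 D h_val using \<open>cos \<Theta>1 \<noteq> 0\<close> \<open>real p - 1 \<noteq> 0\<close>
    by (simp_all add: \<mu>_nz \<open>u0 \<noteq> 0\<close> \<open>cos \<Theta>2 \<noteq> 0\<close> \<open>sin \<Theta>1 \<noteq> 0\<close> field_simps power2_eq_square)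
  note E = chg2_hessian[OF k k0 \<open>sin \<Theta>1 \<noteq> 0\<close> \<phi> this, folded E_def]
  have kh: "(k 0)\<^sup>2 * h = 4 * (real p - 1) * (cmod \<mu>)^3 * cmod u0 * sin \<Theta>1 * cos \<Theta>2"
    unfolding k(1) h_val using \<open>cos \<Theta>1 \<noteq> 0\<close> \<open>cos \<Theta>2 \<noteq> 0\<close>
    by (simp add: field_simps power2_eq_square power3_eq_cube)
  have E22: "hessian_form (E 2) (E 2) / cos \<Theta>2 = - 4 * (real p - 1)^2 * (cmod \<mu>)^2 / ((k 0)^2 * h)"
    unfolding E kh using \<open>real p - 1 \<noteq> 0\<close>
    by (simp add: \<mu>_nz \<open>u0 \<noteq> 0\<close> \<open>cos \<Theta>2 \<noteq> 0\<close> \<open>sin \<Theta>1 \<noteq> 0\<close> field_simps power2_eq_square power3_eq_cube)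
  show ?thesis
  proof (intro conjI ballI)
    fix i j :: nat
    assume "i \<in> {1, 2, 3}" "j \<in> {1, 2, 3}"
    then show "hessian_form (E i) (E j) / cos \<Theta>2 =
        (if i = j then (if i = 1 then h
                        else if i = 2 then - 4 * (real p - 1)^2 * (cmod \<mu>)^2 / ((k 0)^2 * h)
                        else 0)
         else 0)"
      using E E22 h_val hessian_form_commute[of "E i" "E j"] by auto
  next
    show "h = 4 * (real p - 1) * (cmod \<mu>)^3 * cmod u0 * sin \<Theta>1 * cos \<Theta>2 / (k 0)^2"
      using kh k0 by (simp add: field_simps)
  qed
qed

end

theorem lemma3p11:
  fixes p q :: nat and \<mu> u0 v0 :: complex and a1 a2 am :: real and \<kappa> :: int
    and x0 k y0 w0 :: "nat \<Rightarrow> real" and Q R Rhat Rhat1 Rhat2 :: "(nat \<Rightarrow> real) \<Rightarrow> real"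
    and s h l1 l2 \<Theta>1 \<Theta>2 \<Theta>3 \<phi> :: real
  assumes "p \<ge> 2" and "q \<ge> 2" and "\<mu> \<noteq> 0"
    and sing: "singular_point p q \<mu> (u0, v0)"
    and arg_u: "u0 = complex_of_real (cmod u0) * cis a1"
    and arg_v: "v0 = complex_of_real (cmod v0) * cis a2"
    and arg_mu: "\<mu> = complex_of_real (cmod \<mu>) * cis am"
    and kappa: "(real p - 1) / 2 * a1 + am = (real q - 1) / 2 * a2 + real_of_int \<kappa> * pi"
  defines "\<Theta>1 \<equiv> (real p + 1) / 2 * a1"
    and "\<Theta>2 \<equiv> (real p - 1) / 2 * a1 + am"
    and "\<Theta>3 \<equiv> (real q + 1) / 2 * a2"
    and "Q \<equiv> Qpol p q \<mu>" and "R \<equiv> Rpol p q \<mu>"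
    and "x0 \<equiv> pt4 (cmod u0) a1 (cmod v0) a2"
    and "k \<equiv> (\<lambda>i. pd Q x0 i)"
    and "\<phi> \<equiv> (-1) powi \<kappa> * (real p - 1) * cmod v0 * sin \<Theta>3
              + (real q - 1) * cmod \<mu> * cmod u0 * sin \<Theta>1"
    and "y0 \<equiv> chg1 k x0"
    and "s \<equiv> pd (R \<circ> chg1_inv k) y0 0"
    and "Rhat \<equiv> (\<lambda>x. R x - s * Q x)"
    and "Rhat1 \<equiv> Rhat \<circ> chg1_inv k"
    and "h \<equiv> pd2 Rhat1 y0 1 1"
    and "l1 \<equiv> pd2 Rhat1 y0 1 2 / h"
    and "l2 \<equiv> pd2 Rhat1 y0 1 3 / h"
    and "w0 \<equiv> chg2 l1 l2 y0"
    and "Rhat2 \<equiv> Rhat1 \<circ> chg2_inv l1 l2"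
  assumes k1: "k 0 \<noteq> 0" and phi0: "\<phi> = 0" and h0: "h \<noteq> 0"
  shows "(\<forall>i\<in>{1,2,3}. \<forall>j\<in>{1,2,3}. pd2 Rhat2 w0 i j =
            (if i = j then (if i = 1 then h
                            else if i = 2 then - 4 * (real p - 1)^2 * (cmod \<mu>)^2 / ((k 0)^2 * h)
                            else 0)
             else 0))
       \<and> h = 4 * (real p - 1) * (cmod \<mu>)^3 * cmod u0 * sin \<Theta>1 * cos \<Theta>2 / (k 0)^2"
proof -
  interpret singular_polar_point p q \<mu> u0 v0 a1 a2 am \<kappa> \<Theta>1 \<Theta>2 \<Theta>3 "(-1) powi \<kappa>"
    by unfold_locales (use assms in \<open>simp_all add: \<Theta>1_def \<Theta>2_def \<Theta>3_def\<close>)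
  have k: "k 0 = 2 * cmod \<mu> * cos \<Theta>1 * cos \<Theta>2" "k 1 = - 2 * cmod \<mu> * cmod u0 * sin \<Theta>1 * cos \<Theta>2"
      "k 2 = 2 * (-1) powi \<kappa> * cos \<Theta>3 * cos \<Theta>2" "k 3 = - 2 * (-1) powi \<kappa> * cmod v0 * sin \<Theta>3 * cos \<Theta>2"
    unfolding k_def Q_def x0_def by (fact pd_Qpol_at_z0)+
  have "cos \<Theta>2 \<noteq> 0" using k1 k(1) by auto
  have y0: "chg1_inv k y0 = pt4 (cmod u0) a1 (cmod v0) a2"
    unfolding y0_def x0_def by (rule chg1_inv_chg1[of k, OF k1])
  have w0: "chg2_inv l1 l2 w0 = y0"
    unfolding w0_def y0_def chg1_def by (rule chg2_inv_chg2)
  have Rhat: "Rhat = (\<lambda>x. R x - tan \<Theta>2 * Q x)"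
    unfolding Rhat_def s_def y0_def R_def x0_def pd_Rpol_chg1_at_z0[of k, OF k(1) k1] ..
  have Hess1: "pd2 Rhat1 y0 i j = hessian_form (chg1_inv k (\<lambda>m. of_bool (m = i)))
      (chg1_inv k (\<lambda>m. of_bool (m = j))) / cos \<Theta>2" for i j
    unfolding Rhat1_def Rhat comp_def R_def Q_def
    by (rule pd2_Rhat_linear_coords[OF chg1_inv_fun_upd _ \<open>cos \<Theta>2 \<noteq> 0\<close>]) (fact y0)
  have Hess2: "pd2 Rhat2 w0 i j = hessian_form (chg1_inv k (chg2_inv l1 l2 (\<lambda>m. of_bool (m = i))))
      (chg1_inv k (chg2_inv l1 l2 (\<lambda>m. of_bool (m = j)))) / cos \<Theta>2" for i j
    unfolding Rhat2_def Rhat1_def Rhat comp_def R_def Q_def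
    by (rule pd2_Rhat_linear_coords[OF chg12_inv_fun_upd _ \<open>cos \<Theta>2 \<noteq> 0\<close>]) (simp add: w0 y0)
  show ?thesis
    unfolding Hess2
    by (rule hessian_chg2_diagonal[OF k k1 phi0[unfolded \<phi>_def]])
      (simp_all only: h0[unfolded h_def Hess1] h_def l1_def l2_def Hess1 not_False_eq_True)
qed

end
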